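(* Over all 3-periodics of $\mathcal{E}$, the incenter $X_1^\dagger$ of the focus-inversive triangle moves on the circle with center and radius \[C_1^\dagger=\left(c\left(-1+\rho^2\frac{-2a^2+b^2+2\delta}{2b^4}\right),0\right),\qquad R_1^\dagger=\rho^2\,\frac{-2\delta^2+b^4+(2a^2-b^2)\delta}{2ab^4}.\]
   Context: Let $a>b>0$ and let $\mathcal{E}$ be the ellipse $x^2/a^2+y^2/b^2=1$. Set $c=\sqrt{a^2-b^2}$, $\delta=\sqrt{a^4-a^2b^2+b^4}$, and let the foci be $f_1=(-c,0)$, $f_2=(c,0)$. A 3-periodic is a triangle $P_1P_2P_3$ with vertices on $\mathcal{E}$ such that at each vertex the normal to $\mathcal{E}$ bisects the angle formed by the two sides meeting at that vertex; these form a one-parameter family (one through every point of $\mathcal{E}$). Fix $\rho>0$; the focus-inversive triangle has vertices $P_i^\dagger=f_1+(\rho/d_{1,i})^2(P_i-f_1)$, $d_{1,i}=|P_i-f_1|$. *)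

theory Defs
  imports "HOL-Analysis.Analysis"
begin

definition on_ellipse :: "real \<Rightarrow> real \<Rightarrow> complex \<Rightarrow> bool" where
  "on_ellipse a b P \<longleftrightarrow> (Re P)\<^sup>2 / a\<^sup>2 + (Im P)\<^sup>2 / b\<^sup>2 = 1"

definition ell_normal :: "real \<Rightarrow> real \<Rightarrow> complex \<Rightarrow> complex" where
  "ell_normal a b P = Complex (Re P / a\<^sup>2) (Im P / b\<^sup>2)"

definition cross2 :: "complex \<Rightarrow> complex \<Rightarrow> real" where
  "cross2 z w = Re z * Im w - Im z * Re w"

text \<open>At vertex P with neighbours Q and R, the normal line to the ellipse bisects
  the angle QPR: the internal bisector direction (sum of unit vectors from P towards
  Q and towards R) is parallel to the normal.\<close>
definition normal_bisects :: "real \<Rightarrow> real \<Rightarrow> complex \<Rightarrow> complex \<Rightarrow> complex \<Rightarrow> bool" where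
  "normal_bisects a b P Q R \<longleftrightarrow>
     cross2 (ell_normal a b P)
       ((Q - P) / of_real (norm (Q - P)) + (R - P) / of_real (norm (R - P))) = 0"

definition three_periodic :: "real \<Rightarrow> real \<Rightarrow> complex \<Rightarrow> complex \<Rightarrow> complex \<Rightarrow> bool" where
  "three_periodic a b P1 P2 P3 \<longleftrightarrow>
     P1 \<noteq> P2 \<and> P2 \<noteq> P3 \<and> P1 \<noteq> P3 \<and>
     on_ellipse a b P1 \<and> on_ellipse a b P2 \<and> on_ellipse a b P3 \<and>
     normal_bisects a b P1 P3 P2 \<and> normal_bisects a b P2 P1 P3 \<and>
     normal_bisects a b P3 P2 P1"

definition inversion :: "real \<Rightarrow> complex \<Rightarrow> complex \<Rightarrow> complex" where
  "inversion \<rho> f P = f + of_real ((\<rho> / norm (P - f))\<^sup>2) * (P - f)"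

definition incenter :: "complex \<Rightarrow> complex \<Rightarrow> complex \<Rightarrow> complex" where
  "incenter A B C =
     (of_real (norm (B - C)) * A + of_real (norm (C - A)) * B + of_real (norm (A - B)) * C)
     / of_real (norm (B - C) + norm (C - A) + norm (A - B))"

end

theory Submission
  imports Defs
begin

text \<open>For points P, Q of the ellipse let g(P,Q) = 1 - Px Qx/a^2 - Py Qy/b^2 (the polar gap). Since
  the normal at P is the gradient of the ellipse, the reflection law at P says g(P,Q)/|PQ| = g(P,R)/|PR|,
  so g/|PQ| takes a common value k on all three sides of a 3-periodic. For the rational
  parametrisation P(t) this reads k^2 (a^2 (1 - ti tj)^2 + b^2 (ti + tj)^2) = (ti - tj)^2 for each pair
  of vertices; hence t2, t3 are the roots of a quadratic determined by t1 and K = k^2, and the third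
  relation forces c^4 K^2 + 2 (2a^2 - c^2) K = 3, which expresses K through \<delta>.

  Inversion about f1 multiplies |PQ| by \<rho>^2/(|P f1| |Q f1|), and |P(t) f1| = (a (1+t^2) + 2ct)/(1+t^2),
  so the inverted incenter is f1 + \<rho>^2 times a rational function of t1, t2, t3, symmetric in t2, t3.
  Eliminating t2, t3 by Vieta's formulas and reducing modulo the equation for K puts it on the stated
  circle. The parametrisation misses the vertex (0,-b); this is harmless, because (0,b) and (0,-b)
  are never both vertices of a 3-periodic and replacing b by -b swaps them.\<close>

definition ellipse_point :: "real \<Rightarrow> real \<Rightarrow> real \<Rightarrow> complex" where
  "ellipse_point a b t = Complex (2*a*t/(1+t^2)) (b*(1-t^2)/(1+t^2))"

text \<open>Stereographic projection of the ellipse from its vertex (0,-b).\<close>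
lemma ellipse_point_exists:
  assumes "a \<noteq> 0" "b \<noteq> 0" "on_ellipse a b P" "P \<noteq> Complex 0 (-b)"
  obtains t where "P = ellipse_point a b t"
proof -
  define u w where "u = Re P / a" and "w = Im P / b"
  have uw: "u^2 + w^2 = 1"
    using assms(1-3) unfolding on_ellipse_def u_def w_def by (simp add: power_divide)
  have w1: "1 + w \<noteq> 0"
  proof
    assume "1 + w = 0"
    then have "w = -1" by simp
    with uw have "u = 0" by simp
    with \<open>w = -1\<close> have "P = Complex 0 (-b)"
      using assms(1,2) unfolding u_def w_def by (simp add: complex_eq_iff field_simps)
    with assms(4) show False ..
  qed
  define t where "t = u/(1+w)"
  have "t^2 = u^2/(1+w)^2" by (simp add: t_def power_divide)
  also have "u^2 = (1-w)*(1+w)" using uw by (simp add: algebra_simps power2_eq_square)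
  finally have "t^2 = (1-w)/(1+w)" using w1 by (simp add: power2_eq_square)
  then have tt: "1 + t^2 = 2/(1+w)" using w1 by (simp add: field_simps)
  have "1 - t^2 = 2 - 2/(1+w)" using tt by simp
  then have "(1-t^2)/(1+t^2) = w" unfolding tt using w1 by (simp add: field_simps)
  moreover have "2*a*t/(1+t^2) = a*t*(1+w)" unfolding tt using w1 by (simp add: field_simps)
  then have "2*a*t/(1+t^2) = a*u" unfolding t_def using w1 by simp
  ultimately have "2*a*t/(1+t^2) = Re P" and "b*(1-t^2)/(1+t^2) = Im P"
    using assms(1,2) unfolding u_def w_def by (simp_all add: field_simps)
  then have "P = ellipse_point a b t" unfolding ellipse_point_def by (simp add: complex_eq_iff)
  then show thesis by (rule that)
qed

definition polar_gap :: "real \<Rightarrow> real \<Rightarrow> complex \<Rightarrow> complex \<Rightarrow> real" where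
  "polar_gap a b P Q = 1 - Re P * Re Q / a^2 - Im P * Im Q / b^2"

lemma polar_gap_commute: "polar_gap a b P Q = polar_gap a b Q P"
  unfolding polar_gap_def by (simp add: mult.commute)

lemma polar_gap_on_ellipse:
  assumes "on_ellipse a b P" "on_ellipse a b Q"
  shows "2 * polar_gap a b P Q = (Re P - Re Q)^2/a^2 + (Im P - Im Q)^2/b^2"
proof -
  have "(Re P - Re Q)^2/a^2 + (Im P - Im Q)^2/b^2
      = ((Re P)^2/a^2 + (Im P)^2/b^2) + ((Re Q)^2/a^2 + (Im Q)^2/b^2)
        - 2*(Re P * Re Q/a^2) - 2*(Im P * Im Q/b^2)"
    by (simp add: power2_diff add_divide_distrib diff_divide_distrib algebra_simps)
  then show ?thesis using assms unfolding on_ellipse_def polar_gap_def by argo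
qed

lemma polar_gap_pos:
  assumes "a \<noteq> 0" "b \<noteq> 0" "on_ellipse a b P" "on_ellipse a b Q" "P \<noteq> Q"
  shows "polar_gap a b P Q > 0"
proof -
  have "(Re P - Re Q)^2/a^2 + (Im P - Im Q)^2/b^2 > 0"
  proof (cases "Re P = Re Q")
    case True
    then have "Im P \<noteq> Im Q" using assms(5) by (simp add: complex_eq_iff)
    with True show ?thesis using assms(2) by simp
  next
    case False
    then show ?thesis using assms(1) by (simp add: add_pos_nonneg)
  qed
  then show ?thesis using polar_gap_on_ellipse[OF assms(3,4)] by simp
qed

lemma inner_ell_normal_chord:
  assumes "on_ellipse a b P"
  shows "inner (ell_normal a b P) (Q - P) = - polar_gap a b P Q"
proof -
  have "inner (ell_normal a b P) (Q - P)
      = Re P * Re Q/a^2 + Im P * Im Q/b^2 - ((Re P)^2/a^2 + (Im P)^2/b^2)"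
    unfolding inner_complex_def ell_normal_def by (simp add: power2_eq_square divide_inverse algebra_simps)
  then show ?thesis using assms unfolding on_ellipse_def polar_gap_def by simp
qed

lemma cross2_bisector:
  fixes N u v :: complex
  assumes "norm u = 1" "norm v = 1" "cross2 N (u + v) = 0" "u + v \<noteq> 0"
  shows "inner N u = inner N v"
proof -
  define w z where "w = u + v" and "z = u - v"
  have "inner w z = ((Re u)^2 + (Im u)^2) - ((Re v)^2 + (Im v)^2)"
    unfolding w_def z_def inner_complex_def by (simp add: power2_eq_square algebra_simps)
  then have wz: "inner w z = 0" using assms(1,2) by (simp flip: cmod_power2)
  have "inner N z * Re w = Re N * inner w z - Im z * cross2 N w"
    and "inner N z * Im w = Im N * inner w z + Re z * cross2 N w"
    unfolding inner_complex_def cross2_def by algebra+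
  then have "inner N z * Re w = 0" "inner N z * Im w = 0"
    using wz assms(3) unfolding w_def by simp_all
  moreover have "Re w \<noteq> 0 \<or> Im w \<noteq> 0" using assms(4) unfolding w_def by (simp add: complex_eq_iff)
  ultimately have "inner N z = 0" by auto
  then show "inner N u = inner N v" unfolding z_def by (simp add: inner_diff_right)
qed

text \<open>The normal has inner product -g(P,Q)/|PQ| with the unit vector from P towards Q. The
  bisector condition makes these equal for Q and R unless the two unit vectors are opposite, which
  is excluded because both inner products are negative.\<close>
lemma normal_bisects_polar_ratio:
  assumes "a \<noteq> 0" "b \<noteq> 0" "on_ellipse a b P" "on_ellipse a b Q" "on_ellipse a b R"
    and "Q \<noteq> P" "R \<noteq> P" "normal_bisects a b P Q R"
  shows "polar_gap a b P Q / cmod (Q - P) = polar_gap a b P R / cmod (R - P)"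
proof -
  define u v where "u = (Q - P) / of_real (cmod (Q - P))" and "v = (R - P) / of_real (cmod (R - P))"
  have "norm u = 1" "norm v = 1" using assms(6,7) unfolding u_def v_def by (simp_all add: norm_divide)
  moreover have "cross2 (ell_normal a b P) (u + v) = 0"
    using assms(8) unfolding normal_bisects_def u_def v_def .
  ultimately have "u + v = 0 \<or> inner (ell_normal a b P) u = inner (ell_normal a b P) v"
    using cross2_bisector by blast
  moreover have "inner N (z / of_real r) = inner N z / r" for N z :: complex and r :: real
    by (simp add: inner_complex_def add_divide_distrib)
  then have "inner (ell_normal a b P) u = - (polar_gap a b P Q / cmod (Q - P))"
    and "inner (ell_normal a b P) v = - (polar_gap a b P R / cmod (R - P))"
    unfolding u_def v_def using inner_ell_normal_chord[OF assms(3)] by simp_all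
  moreover have "polar_gap a b P Q / cmod (Q - P) > 0" "polar_gap a b P R / cmod (R - P) > 0"
    using polar_gap_pos[OF assms(1-4)] polar_gap_pos[OF assms(1-3,5)] assms(6,7) by auto
  moreover have "inner (ell_normal a b P) u + inner (ell_normal a b P) v = inner (ell_normal a b P) (u + v)"
    by (simp add: inner_add_right)
  ultimately show ?thesis by auto
qed

lemma normal_bisects_commute: "normal_bisects a b P Q R = normal_bisects a b P R Q"
  unfolding normal_bisects_def by (simp add: add.commute)

lemma three_periodic_polar_ratio:
  assumes "a \<noteq> 0" "b \<noteq> 0" "three_periodic a b P1 P2 P3"
  obtains k where "k > 0" "k * cmod (P1 - P2) = polar_gap a b P1 P2"
    "k * cmod (P1 - P3) = polar_gap a b P1 P3" "k * cmod (P2 - P3) = polar_gap a b P2 P3"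
proof -
  from assms(3) have ne: "P1 \<noteq> P2" "P2 \<noteq> P3" "P1 \<noteq> P3"
    and on: "on_ellipse a b P1" "on_ellipse a b P2" "on_ellipse a b P3"
    and nb: "normal_bisects a b P1 P3 P2" "normal_bisects a b P2 P1 P3"
    unfolding three_periodic_def by auto
  define k where "k = polar_gap a b P1 P2 / cmod (P1 - P2)"
  have "polar_gap a b P1 P3 / cmod (P3 - P1) = polar_gap a b P1 P2 / cmod (P2 - P1)"
    using normal_bisects_polar_ratio[OF assms(1,2) on(1,3,2)] ne nb(1) by auto
  then have k13: "k = polar_gap a b P1 P3 / cmod (P1 - P3)"
    unfolding k_def by (simp add: norm_minus_commute)
  have "polar_gap a b P2 P1 / cmod (P1 - P2) = polar_gap a b P2 P3 / cmod (P3 - P2)"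
    using normal_bisects_polar_ratio[OF assms(1,2) on(2,1,3)] ne nb(2) by auto
  then have k23: "k = polar_gap a b P2 P3 / cmod (P2 - P3)"
    unfolding k_def by (simp add: norm_minus_commute polar_gap_commute)
  have "k > 0" unfolding k_def using polar_gap_pos[OF assms(1,2) on(1,2) ne(1)] ne(1) by simp
  moreover have "k * cmod (P1 - P2) = polar_gap a b P1 P2" unfolding k_def using ne by simp
  moreover have "k * cmod (P1 - P3) = polar_gap a b P1 P3" unfolding k13 using ne by simp
  moreover have "k * cmod (P2 - P3) = polar_gap a b P2 P3" unfolding k23 using ne by simp
  ultimately show thesis by (rule that)
qed

lemma three_periodic_rotate: "three_periodic a b P1 P2 P3 \<Longrightarrow> three_periodic a b P2 P3 P1"
  unfolding three_periodic_def using normal_bisects_commute by metis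

lemma three_periodic_reflect: "three_periodic a (-b) P1 P2 P3 = three_periodic a b P1 P2 P3"
  unfolding three_periodic_def on_ellipse_def normal_bisects_def ell_normal_def by simp

text \<open>The normal at an end of the minor axis is the minor axis itself, so a reflected
  chord through the opposite end is the minor axis again.\<close>
lemma normal_bisects_minor_axis:
  assumes "b \<noteq> 0" "normal_bisects a b (Complex 0 b) (Complex 0 (-b)) R" "on_ellipse a b R"
    and "R \<noteq> Complex 0 b"
  shows "R = Complex 0 (-b)"
proof -
  have "Re R = 0"
    using assms(1,2,4) unfolding normal_bisects_def cross2_def ell_normal_def
    by (auto simp: cmod_def real_sqrt_mult power2_eq_square)
  with assms(1,3) have "(Im R)^2 = b^2" unfolding on_ellipse_def by (simp add: field_simps)
  then have "Im R = b \<or> Im R = -b" by (simp add: power2_eq_iff)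
  with \<open>Re R = 0\<close> assms(4) show ?thesis by (auto simp: complex_eq_iff)
qed

lemma three_periodic_minor_axis:
  assumes "b \<noteq> 0" "three_periodic a b (Complex 0 b) P2 P3"
  shows "P2 \<noteq> Complex 0 (-b)" "P3 \<noteq> Complex 0 (-b)"
proof -
  from assms(2) have ne: "P2 \<noteq> Complex 0 b" "P3 \<noteq> Complex 0 b" "P2 \<noteq> P3"
    and on: "on_ellipse a b P2" "on_ellipse a b P3"
    and nb: "normal_bisects a b (Complex 0 b) P3 P2"
    unfolding three_periodic_def by auto
  show "P2 \<noteq> Complex 0 (-b)"
    using normal_bisects_minor_axis[OF assms(1) _ on(2) ne(2)] nb normal_bisects_commute ne(3) by metis
  show "P3 \<noteq> Complex 0 (-b)"
    using normal_bisects_minor_axis[OF assms(1) _ on(1) ne(1)] nb ne(3) by metis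
qed

lemma three_periodic_avoid_vertex:
  assumes "b \<noteq> 0" "three_periodic a b P1 P2 P3"
  obtains \<beta> where "\<beta>^2 = b^2" "three_periodic a \<beta> P1 P2 P3" "Complex 0 (-\<beta>) \<notin> {P1, P2, P3}"
proof (cases "Complex 0 (-b) \<in> {P1, P2, P3}")
  case False
  then show thesis using that assms(2) by blast
next
  case True
  have "Complex 0 b \<notin> {P1, P2, P3}"
  proof
    assume "Complex 0 b \<in> {P1, P2, P3}"
    moreover have "three_periodic a b P2 P3 P1" "three_periodic a b P3 P1 P2"
      using three_periodic_rotate assms(2) by blast+
    moreover have "Complex 0 b \<noteq> Complex 0 (-b)" using assms(1) by simp
    ultimately show False
      using True three_periodic_minor_axis[OF assms(1)] assms(2) by fastforce
  qed
  then show thesis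
    using that[of "-b"] assms(2) three_periodic_reflect by simp
qed

lemma inversion_eq_cnj: "inversion \<rho> f P = f + of_real (\<rho>^2) / cnj (P - f)"
proof -
  have "of_real (\<rho>^2) / cnj (P - f) = of_real (\<rho>^2) * (P - f) / of_real ((cmod (P - f))^2)"
    by (subst complex_div_cnj) (simp del: complex_cnj_diff)
  then show ?thesis unfolding inversion_def by (simp add: power_divide)
qed

lemma norm_inversion_diff:
  assumes "P \<noteq> f" "Q \<noteq> f"
  shows "cmod (inversion \<rho> f P - inversion \<rho> f Q) = \<rho>^2 * cmod (P - Q) / (cmod (P - f) * cmod (Q - f))"
proof -
  have "inversion \<rho> f P - inversion \<rho> f Q = of_real (\<rho>^2) * cnj (Q - P) / (cnj (P - f) * cnj (Q - f))"
    using assms unfolding inversion_eq_cnj by (simp add: field_simps del: complex_cnj_diff) (simp add: algebra_simps)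
  then show ?thesis by (simp add: norm_mult norm_divide norm_power norm_minus_commute del: complex_cnj_diff)
qed

lemma incenter_inversion:
  fixes \<rho> :: real and f P1 P2 P3 :: complex
  defines "d1 \<equiv> cmod (P1 - f)" and "d2 \<equiv> cmod (P2 - f)" and "d3 \<equiv> cmod (P3 - f)"
    and "l1 \<equiv> cmod (P2 - P3)" and "l2 \<equiv> cmod (P1 - P3)" and "l3 \<equiv> cmod (P1 - P2)"
  assumes "P1 \<noteq> f" "P2 \<noteq> f" "P3 \<noteq> f" "\<rho> \<noteq> 0" "l1*d1 + l2*d2 + l3*d3 \<noteq> 0"
  shows "incenter (inversion \<rho> f P1) (inversion \<rho> f P2) (inversion \<rho> f P3)
    = f + of_real (\<rho>^2) * (of_real (l1/d1) * (P1 - f) + of_real (l2/d2) * (P2 - f) + of_real (l3/d3) * (P3 - f))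
        / of_real (l1*d1 + l2*d2 + l3*d3)"
proof -
  \<comment> \<open>The inverted side lengths are \<kappa> l1 d1, \<kappa> l2 d2, \<kappa> l3 d3, so \<kappa> cancels from the barycentric weights.\<close>
  define \<kappa> where "\<kappa> = \<rho>^2/(d1*d2*d3)"
  have d: "d1 > 0" "d2 > 0" "d3 > 0" using assms(7-9) unfolding d1_def d2_def d3_def by auto
  have "\<kappa> \<noteq> 0" unfolding \<kappa>_def using d assms(10) by simp
  have sides: "cmod (inversion \<rho> f P2 - inversion \<rho> f P3) = \<kappa>*(l1*d1)"
    "cmod (inversion \<rho> f P3 - inversion \<rho> f P1) = \<kappa>*(l2*d2)"
    "cmod (inversion \<rho> f P1 - inversion \<rho> f P2) = \<kappa>*(l3*d3)"
    using norm_inversion_diff[OF assms(8,9)] norm_inversion_diff[OF assms(9,7)] norm_inversion_diff[OF assms(7,8)] d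
    unfolding \<kappa>_def d1_def d2_def d3_def l1_def l2_def l3_def by (simp_all add: field_simps norm_minus_commute)
  have vertex: "inversion \<rho> f P = f + of_real (\<rho>^2/(cmod (P - f))^2) * (P - f)" for P
    unfolding inversion_def by (simp add: power_divide)
  have "(of_real (\<kappa>*(l1*d1)) * (f + of_real (\<rho>^2/d1^2) * u1) + of_real (\<kappa>*(l2*d2)) * (f + of_real (\<rho>^2/d2^2) * u2)
        + of_real (\<kappa>*(l3*d3)) * (f + of_real (\<rho>^2/d3^2) * u3)) / of_real (\<kappa>*(l1*d1) + \<kappa>*(l2*d2) + \<kappa>*(l3*d3))
      = f + of_real (\<rho>^2) * (of_real (l1/d1) * u1 + of_real (l2/d2) * u2 + of_real (l3/d3) * u3)
        / of_real (l1*d1 + l2*d2 + l3*d3)" for u1 u2 u3 :: complex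
  proof -
    have "inverse d1 * d1 = 1" "inverse d2 * d2 = 1" "inverse d3 * d3 = 1" "inverse \<kappa> * \<kappa> = 1"
      "inverse (l1*d1 + l2*d2 + l3*d3) * (l1*d1 + l2*d2 + l3*d3) = 1"
      using d \<open>\<kappa> \<noteq> 0\<close> assms(11) by simp_all
    then show ?thesis
      unfolding complex_eq_iff distrib_left[of \<kappa>, symmetric] plus_complex.sel
        Re_divide_of_real Im_divide_of_real
      unfolding plus_complex.sel times_complex.sel Re_complex_of_real Im_complex_of_real
      unfolding divide_inverse inverse_mult_distrib power_inverse[symmetric]
      by algebra
  qed
  then show ?thesis
    unfolding incenter_def sides
    unfolding vertex[of P1] vertex[of P2] vertex[of P3] d1_def[symmetric] d2_def[symmetric] d3_def[symmetric] .
qed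

definition focal_num :: "real \<Rightarrow> real \<Rightarrow> real \<Rightarrow> real" where
  "focal_num a c t = a*(1+t^2) + 2*c*t"

lemma focal_num_pos:
  assumes "0 < c" "c < a"
  shows "focal_num a c t > 0"
proof -
  have "focal_num a c t = (a-c)*(1+t^2) + c*(1+t)^2"
    unfolding focal_num_def by (simp add: algebra_simps power2_eq_square)
  moreover have "(a-c)*(1+t^2) > 0" using assms by (simp add: add_pos_nonneg)
  moreover have "c*(1+t)^2 \<ge> 0" using assms by simp
  ultimately show ?thesis by linarith
qed

lemma polar_gap_ellipse_point:
  assumes "a \<noteq> 0" "b \<noteq> 0"
  shows "polar_gap a b (ellipse_point a b r) (ellipse_point a b t) = 2*(r-t)^2/((1+r^2)*(1+t^2))"
proof -
  have "1+r^2 > 0" "1+t^2 > 0" by (simp_all add: add_pos_nonneg)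
  then have "inverse (1+r^2) * (1+r^2) = 1" "inverse (1+t^2) * (1+t^2) = 1"
    "inverse (a^2) * a^2 = 1" "inverse (b^2) * b^2 = 1" using assms by simp_all
  then show ?thesis
    unfolding polar_gap_def ellipse_point_def complex.sel divide_inverse inverse_mult_distrib
    by algebra
qed

lemma norm_ellipse_point_diff:
  "(cmod (ellipse_point a b r - ellipse_point a b t))^2
     = 4*(r-t)^2*(a^2*(1-r*t)^2 + b^2*(r+t)^2)/((1+r^2)*(1+t^2))^2"
proof -
  have "1+r^2 > 0" "1+t^2 > 0" by (simp_all add: add_pos_nonneg)
  then show ?thesis
    unfolding ellipse_point_def cmod_power2 by (simp add: field_simps power2_eq_square) algebra
qed

lemma norm_ellipse_point_focus:
  assumes "c^2 = a^2 - b^2" "0 < c" "c < a"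
  shows "cmod (ellipse_point a b t - Complex (-c) 0) = focal_num a c t/(1+t^2)"
proof -
  have T: "1+t^2 > 0" by (simp add: add_pos_nonneg)
  have "2*a*t/(1+t^2) + c = (2*a*t + c*(1+t^2))/(1+t^2)" using T by (simp add: field_simps)
  then have "(cmod (ellipse_point a b t - Complex (-c) 0))^2
      = (2*a*t + c*(1+t^2))^2/(1+t^2)^2 + (b*(1-t^2))^2/(1+t^2)^2"
    unfolding ellipse_point_def cmod_power2 by (simp add: power_divide)
  also have "\<dots> = ((2*a*t + c*(1+t^2))^2 + b^2*(1-t^2)^2)/(1+t^2)^2"
    by (simp add: add_divide_distrib power_mult_distrib)
  also have "(2*a*t + c*(1+t^2))^2 + b^2*(1-t^2)^2 = (focal_num a c t)^2"
    unfolding focal_num_def using assms(1) by algebra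
  finally have "(cmod (ellipse_point a b t - Complex (-c) 0))^2 = (focal_num a c t/(1+t^2))^2"
    by (simp add: power_divide)
  moreover have "focal_num a c t/(1+t^2) \<ge> 0"
    using focal_num_pos[OF assms(2,3), of t] T by simp
  ultimately show ?thesis using power2_eq_iff_nonneg[OF norm_ge_zero] by blast
qed

definition chord_relation :: "real \<Rightarrow> real \<Rightarrow> real \<Rightarrow> real \<Rightarrow> real \<Rightarrow> bool" where
  "chord_relation a c K s t \<longleftrightarrow> K*(a^2*(1-s*t)^2 + (a^2-c^2)*(s+t)^2) = (s-t)^2"

lemma chord_relation_ellipse_point:
  assumes "a \<noteq> 0" "b \<noteq> 0" "c^2 = a^2 - b^2" "r \<noteq> t"
    and "k * cmod (ellipse_point a b r - ellipse_point a b t)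
           = polar_gap a b (ellipse_point a b r) (ellipse_point a b t)"
  shows "chord_relation a c (k^2) r t"
proof -
  define D where "D = (1+r^2)*(1+t^2)"
  have "D > 0" unfolding D_def by (simp add: add_pos_nonneg)
  have "(k * cmod (ellipse_point a b r - ellipse_point a b t))^2 = (2*(r-t)^2/D)^2"
    unfolding assms(5) polar_gap_ellipse_point[OF assms(1,2)] D_def ..
  then have "k^2 * (4*(r-t)^2*(a^2*(1-r*t)^2 + b^2*(r+t)^2)/D^2) = (2*(r-t)^2/D)^2"
    unfolding power_mult_distrib norm_ellipse_point_diff D_def .
  then have "(4*(r-t)^2/D^2) * (k^2*(a^2*(1-r*t)^2 + b^2*(r+t)^2)) = (4*(r-t)^2/D^2) * (r-t)^2"
    by (simp add: field_simps power2_eq_square)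
  moreover have "4*(r-t)^2/D^2 \<noteq> 0" using assms(4) \<open>D > 0\<close> by simp
  ultimately show ?thesis unfolding chord_relation_def using assms(3) by simp
qed

lemma three_periodic_parameters:
  assumes "a \<noteq> 0" "b \<noteq> 0" "c^2 = a^2 - b^2"
    and "three_periodic a b P1 P2 P3" "Complex 0 (-b) \<notin> {P1, P2, P3}"
  obtains t1 t2 t3 k
  where "P1 = ellipse_point a b t1" "P2 = ellipse_point a b t2" "P3 = ellipse_point a b t3"
    and "t1 \<noteq> t2" "t1 \<noteq> t3" "t2 \<noteq> t3" and "k > 0"
    and "k * cmod (P1 - P2) = polar_gap a b P1 P2" "k * cmod (P1 - P3) = polar_gap a b P1 P3"
    and "k * cmod (P2 - P3) = polar_gap a b P2 P3"
    and "chord_relation a c (k^2) t1 t2" "chord_relation a c (k^2) t1 t3" "chord_relation a c (k^2) t2 t3"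
proof -
  from assms(4) have ne: "P1 \<noteq> P2" "P1 \<noteq> P3" "P2 \<noteq> P3"
    and on: "on_ellipse a b P1" "on_ellipse a b P2" "on_ellipse a b P3"
    unfolding three_periodic_def by auto
  obtain t1 t2 t3 where P: "P1 = ellipse_point a b t1" "P2 = ellipse_point a b t2" "P3 = ellipse_point a b t3"
    using ellipse_point_exists[OF assms(1,2)] assms(5) on by (metis insertCI)
  with ne have t: "t1 \<noteq> t2" "t1 \<noteq> t3" "t2 \<noteq> t3" by auto
  obtain k where k: "k > 0" "k * cmod (P1 - P2) = polar_gap a b P1 P2"
    "k * cmod (P1 - P3) = polar_gap a b P1 P3" "k * cmod (P2 - P3) = polar_gap a b P2 P3"
    using three_periodic_polar_ratio[OF assms(1,2,4)] by blast
  have "chord_relation a c (k^2) t1 t2" "chord_relation a c (k^2) t1 t3" "chord_relation a c (k^2) t2 t3"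
    using chord_relation_ellipse_point[OF assms(1-3)] k(2-4) t unfolding P by auto
  with P t k show thesis by (rule that)
qed

definition rel_coeff2 :: "real \<Rightarrow> real \<Rightarrow> real \<Rightarrow> real \<Rightarrow> real" where
  "rel_coeff2 a c K t = K*(a^2*t^2 + (a^2-c^2)) - 1"
definition rel_coeff1 :: "real \<Rightarrow> real \<Rightarrow> real \<Rightarrow> real \<Rightarrow> real" where
  "rel_coeff1 a c K t = 2*t*(1 - K*c^2)"
definition rel_coeff0 :: "real \<Rightarrow> real \<Rightarrow> real \<Rightarrow> real \<Rightarrow> real" where
  "rel_coeff0 a c K t = K*(a^2 + (a^2-c^2)*t^2) - t^2"

lemma rel_coeffs_quadratic:
  "rel_coeff2 a c K t * x^2 + rel_coeff1 a c K t * x + rel_coeff0 a c K t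
     = K*(a^2*(1-t*x)^2 + (a^2-c^2)*(t+x)^2) - (t-x)^2"
  unfolding rel_coeff2_def rel_coeff1_def rel_coeff0_def by algebra

lemma quadratic_roots_vieta:
  fixes A B C x y :: "'a::field"
  assumes "A*x^2 + B*x + C = 0" "A*y^2 + B*y + C = 0" and "x \<noteq> y"
  shows "A*(x+y) = -B" and "A*(x*y) = C"
proof -
  have "(x-y)*(A*(x+y) + B) = 0" using assms(1,2) by algebra
  then show sum: "A*(x+y) = -B" using assms(3) by (simp add: eq_neg_iff_add_eq_0)
  show "A*(x*y) = C" using assms(1) sum by algebra
qed

lemma rel_coeffs_not_all_zero:
  assumes "0 < c" "c < a" "K > 0"
    and A: "rel_coeff2 a c K t = 0" and B: "rel_coeff1 a c K t = 0" and C: "rel_coeff0 a c K t = 0"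
  shows False
proof -
  from B have "t = 0 \<or> K*c^2 = 1" unfolding rel_coeff1_def by auto
  then show False
  proof
    assume "t = 0"
    with C have "K*a^2 = 0" unfolding rel_coeff0_def by simp
    then show False using assms by simp
  next
    assume Kc: "K*c^2 = 1"
    have "K*(a^2*t^2 + (a^2-c^2)) = K*c^2" using A Kc unfolding rel_coeff2_def by simp
    then have t2: "a^2*t^2 = 2*c^2 - a^2" using \<open>K > 0\<close> by simp
    have "K*(a^2 + (a^2-c^2)*t^2) = K*c^2*t^2" using C Kc unfolding rel_coeff0_def by simp
    then have "a^2 + (a^2-c^2)*t^2 = c^2*t^2" using \<open>K > 0\<close> by (simp add: mult.assoc)
    then have "a^2 = (2*c^2 - a^2)*t^2" by (simp add: algebra_simps)
    with t2 have "4*c^2*(c^2 - a^2) = 0" by algebra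
    moreover have "c^2 < a^2" using assms by (simp add: power_strict_mono)
    ultimately show False using assms by simp
  qed
qed

lemma chord_relations_vieta:
  assumes "0 < c" "c < a" "K > 0"
    and "chord_relation a c K t1 t2" "chord_relation a c K t1 t3" and "t2 \<noteq> t3"
  shows "rel_coeff2 a c K t1 \<noteq> 0"
    and "rel_coeff2 a c K t1 * (t2+t3) = - rel_coeff1 a c K t1"
    and "rel_coeff2 a c K t1 * (t2*t3) = rel_coeff0 a c K t1"
proof -
  have roots: "rel_coeff2 a c K t1 * x^2 + rel_coeff1 a c K t1 * x + rel_coeff0 a c K t1 = 0"
    if "chord_relation a c K t1 x" for x
    using that rel_coeffs_quadratic[of a c K t1 x] unfolding chord_relation_def by simp
  show sum: "rel_coeff2 a c K t1 * (t2+t3) = - rel_coeff1 a c K t1"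
    and prod: "rel_coeff2 a c K t1 * (t2*t3) = rel_coeff0 a c K t1"
    using quadratic_roots_vieta[OF roots roots] assms(4-6) by auto
  show "rel_coeff2 a c K t1 \<noteq> 0"
    using rel_coeffs_not_all_zero[OF assms(1-3)] sum prod by force
qed

text \<open>Substituting Vieta's formulas into the third chord relation leaves a factor that
  depends on the caustic parameter K alone.\<close>
lemma caustic_equation:
  assumes "0 < c" "c < a" "K > 0"
    and "chord_relation a c K t1 t2" "chord_relation a c K t1 t3" "chord_relation a c K t2 t3"
    and "t2 \<noteq> t3"
  shows "c^4*K^2 + 2*(2*a^2-c^2)*K - 3 = 0"
proof -
  define A B C where "A = rel_coeff2 a c K t1" and "B = rel_coeff1 a c K t1" and "C = rel_coeff0 a c K t1"
  note vieta = chord_relations_vieta[OF assms(1-5,7), folded A_def B_def C_def]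
  have "A^2*(K*(a^2*(1-t2*t3)^2 + (a^2-c^2)*(t2+t3)^2) - (t2-t3)^2)
      = K*(a^2*(A - A*(t2*t3))^2 + (a^2-c^2)*(A*(t2+t3))^2) - ((A*(t2+t3))^2 - 4*A*(A*(t2*t3)))"
    by algebra
  also have "\<dots> = K*(a^2*(A - C)^2 + (a^2-c^2)*B^2) - (B^2 - 4*A*C)"
    unfolding vieta(2,3) by algebra
  also have "\<dots> = K*(c^4*K^2 + 2*(2*a^2-c^2)*K - 3)*(a^2*(t1^2-1)^2 + 4*(a^2-c^2)*t1^2)"
    unfolding A_def B_def C_def rel_coeff2_def rel_coeff1_def rel_coeff0_def by algebra
  finally have "K*(c^4*K^2 + 2*(2*a^2-c^2)*K - 3)*(a^2*(t1^2-1)^2 + 4*(a^2-c^2)*t1^2) = 0"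
    using assms(6) unfolding chord_relation_def by simp
  moreover have "a^2*(t1^2-1)^2 + 4*(a^2-c^2)*t1^2 > 0"
  proof -
    have "c^2 < a^2" using assms by (simp add: power_strict_mono)
    then show ?thesis
      by (cases "t1 = 0") (use assms in \<open>simp_all add: add_nonneg_pos\<close>)
  qed
  ultimately show ?thesis using assms by simp
qed

lemma quartic_nonneg: "(a::real)^4 - a^2*b^2 + b^4 \<ge> 0"
proof -
  have "a^4 - a^2*b^2 + b^4 = (a^2 - b^2)^2 + a^2*b^2" by algebra
  moreover have "(a^2 - b^2)^2 + a^2*b^2 \<ge> 0" by simp
  ultimately show ?thesis by linarith
qed

lemma caustic_root:
  assumes "c^2 = a^2 - b^2" "K \<ge> 0" "c^4*K^2 + 2*(2*a^2-c^2)*K - 3 = 0"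
  shows "2 * sqrt (a^4 - a^2*b^2 + b^4) = c^4*K + a^2 + b^2"
proof -
  have "(c^4*K + a^2 + b^2)^2 = 4*(a^4 - a^2*b^2 + b^4)" using assms(1,3) by algebra
  moreover have "c^4*K + a^2 + b^2 \<ge> 0" using assms(2) by simp
  ultimately have "c^4*K + a^2 + b^2 = sqrt (4*(a^4 - a^2*b^2 + b^4))"
    by (metis real_sqrt_abs abs_of_nonneg)
  also have "\<dots> = 2 * sqrt (a^4 - a^2*b^2 + b^4)" by (simp only: real_sqrt_mult real_sqrt_four)
  finally show ?thesis by simp
qed

lemma caustic_circle_data:
  fixes a b c K :: real
  defines "\<delta> \<equiv> sqrt (a^4 - a^2*b^2 + b^4)"
  assumes "c^2 = a^2 - b^2" "K \<ge> 0" "c^4*K^2 + 2*(2*a^2-c^2)*K - 3 = 0"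
  shows "c*(c^4*K + a^2 - 2*c^2)/(2*b^4) = c * ((- 2 * a^2 + b^2 + 2 * \<delta>) / (2 * b^4))"
    and "((a^2+c^2)*(c^4*K + 2*a^2 - c^2) - 2*a^4 - 2*c^4)/(4*a*b^4)
       = (- 2 * \<delta>^2 + b^4 + (2 * a^2 - b^2) * \<delta>) / (2 * a * b^4)"
proof -
  have caustic: "2*\<delta> = c^4*K + a^2 + b^2" unfolding \<delta>_def by (rule caustic_root[OF assms(2-4)])
  have \<delta>2: "\<delta>^2 = a^4 - a^2*b^2 + b^4" unfolding \<delta>_def using quartic_nonneg[of a b] by simp
  have "c^4*K + a^2 - 2*c^2 = - 2 * a^2 + b^2 + 2 * \<delta>" using caustic assms(2) by linarith
  then show "c*(c^4*K + a^2 - 2*c^2)/(2*b^4) = c * ((- 2 * a^2 + b^2 + 2 * \<delta>) / (2 * b^4))" by simp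
  have "(a^2+c^2)*(c^4*K + 2*a^2 - c^2) - 2*a^4 - 2*c^4 = 2*(- 2 * \<delta>^2 + b^4 + (2 * a^2 - b^2) * \<delta>)"
    using caustic assms(2) \<delta>2 by algebra
  moreover have "2*x/(4*y) = x/(2*y)" for x y :: real by simp
  ultimately show "((a^2+c^2)*(c^4*K + 2*a^2 - c^2) - 2*a^4 - 2*c^4)/(4*a*b^4)
       = (- 2 * \<delta>^2 + b^4 + (2 * a^2 - b^2) * \<delta>) / (2 * a * b^4)"
    by (metis mult.assoc)
qed

definition focal_prod :: "real \<Rightarrow> real \<Rightarrow> real \<Rightarrow> real \<Rightarrow> real \<Rightarrow> real" where
  "focal_prod a c t1 t2 t3 = focal_num a c t1 * focal_num a c t2 * focal_num a c t3"
definition inc_den :: "real \<Rightarrow> real \<Rightarrow> real \<Rightarrow> real \<Rightarrow> real \<Rightarrow> real" where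
  "inc_den a c t1 t2 t3 = (t2-t3)^2*focal_num a c t1 + (t1-t3)^2*focal_num a c t2 + (t1-t2)^2*focal_num a c t3"
definition inc_num_x :: "real \<Rightarrow> real \<Rightarrow> real \<Rightarrow> real \<Rightarrow> real \<Rightarrow> real" where
  "inc_num_x a c t1 t2 t3 =
     (t2-t3)^2*(1+t1^2)*focal_num a c t2*focal_num a c t3*(2*a*t1 + c*(1+t1^2))
   + (t1-t3)^2*(1+t2^2)*focal_num a c t1*focal_num a c t3*(2*a*t2 + c*(1+t2^2))
   + (t1-t2)^2*(1+t3^2)*focal_num a c t1*focal_num a c t2*(2*a*t3 + c*(1+t3^2))"
definition inc_num_y :: "real \<Rightarrow> real \<Rightarrow> real \<Rightarrow> real \<Rightarrow> real \<Rightarrow> real" where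
  "inc_num_y a c t1 t2 t3 =
     (t2-t3)^2*(1+t1^2)*focal_num a c t2*focal_num a c t3*(1-t1^2)
   + (t1-t3)^2*(1+t2^2)*focal_num a c t1*focal_num a c t3*(1-t2^2)
   + (t1-t2)^2*(1+t3^2)*focal_num a c t1*focal_num a c t2*(1-t3^2)"

lemma focal_prod_pos:
  assumes "0 < c" "c < a"
  shows "focal_prod a c t1 t2 t3 > 0"
  unfolding focal_prod_def using focal_num_pos[OF assms] by simp

lemma inc_den_pos:
  assumes "0 < c" "c < a" and "t1 \<noteq> t2"
  shows "inc_den a c t1 t2 t3 > 0"
proof -
  have "(t1-t2)^2*focal_num a c t3 > 0" using assms focal_num_pos[OF assms(1,2)] by simp
  moreover have "(t2-t3)^2*focal_num a c t1 \<ge> 0" "(t1-t3)^2*focal_num a c t2 \<ge> 0"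
    using focal_num_pos[OF assms(1,2)] by (simp_all add: less_imp_le)
  ultimately show ?thesis unfolding inc_den_def by linarith
qed

definition focal_prod_sym :: "real \<Rightarrow> real \<Rightarrow> real \<Rightarrow> real \<Rightarrow> real \<Rightarrow> real \<Rightarrow> real" where
  "focal_prod_sym a c t \<sigma> \<pi> w =
     focal_num a c t * (a^2*(w^2 + \<pi>^2 + \<sigma>^2) + (4*c^2 - 2*a^2)*\<pi>*w + 2*a*c*\<sigma>*(w + \<pi>))"
definition inc_den_sym :: "real \<Rightarrow> real \<Rightarrow> real \<Rightarrow> real \<Rightarrow> real \<Rightarrow> real \<Rightarrow> real" where
  "inc_den_sym a c t \<sigma> \<pi> w = (2*t^2*a)*w^2 + (-6*t^2*a - 16*t*c - 6*a)*\<pi>*w + (2*a)*\<pi>^2 + (2*t^2*c - 2*t*a)*\<sigma>*w + (-2*t*a + 2*c)*\<sigma>*\<pi> + (2*t^2*a + 2*t*c + 2*a)*\<sigma>^2"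
definition inc_num_x_sym :: "real \<Rightarrow> real \<Rightarrow> real \<Rightarrow> real \<Rightarrow> real \<Rightarrow> real \<Rightarrow> real" where
  "inc_num_x_sym a c t \<sigma> \<pi> w = (2*t^4*a^2*c + 4*t^3*a*c^2 + 2*t^2*a^2*c)*w^4 + (-2*t^4*a^2*c - 16*t^3*a^3 + 12*t^3*a*c^2 - 24*t^2*a^2*c + 16*t^2*c^3 - 16*t*a^3 + 4*t*a*c^2 - 6*a^2*c)*\<pi>*w^3 + (6*t^4*a^2*c - 16*t^4*c^3 + 32*t^3*a^3 - 52*t^3*a*c^2 + 44*t^2*a^2*c - 64*t^2*c^3 + 32*t*a^3 - 52*t*a*c^2 + 6*a^2*c - 16*c^3)*\<pi>^2*w^2 + (-6*t^4*a^2*c - 16*t^3*a^3 + 4*t^3*a*c^2 - 24*t^2*a^2*c + 16*t^2*c^3 - 16*t*a^3 + 12*t*a*c^2 - 2*a^2*c)*\<pi>^3*w + (2*t^2*a^2*c + 4*t*a*c^2 + 2*a^2*c)*\<pi>^4 + (2*t^4*a^3 + 2*t^4*a*c^2 + 2*t^3*a^2*c + 4*t^3*c^3 + 2*t^2*a^3 - 2*t^2*a*c^2 - 2*t*a^2*c)*\<sigma>*w^3 + (-4*t^4*a^3 - 4*t^4*a*c^2 - 30*t^3*a^2*c + 8*t^3*c^3 - 2*t^2*a^3 - 30*t^2*a*c^2 - 18*t*a^2*c - 12*t*c^3 + 2*a^3 - 14*a*c^2)*\<sigma>*\<pi>*w^2 + (2*t^4*a^3 - 14*t^4*a*c^2 -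 18*t^3*a^2*c - 12*t^3*c^3 - 2*t^2*a^3 - 30*t^2*a*c^2 - 30*t*a^2*c + 8*t*c^3 - 4*a^3 - 4*a*c^2)*\<sigma>*\<pi>^2*w + (-2*t^3*a^2*c + 2*t^2*a^3 - 2*t^2*a*c^2 + 2*t*a^2*c + 4*t*c^3 + 2*a^3 + 2*a*c^2)*\<sigma>*\<pi>^3 + (4*t^4*a^2*c + 2*t^3*a^3 + 2*t^3*a*c^2 + 6*t^2*a^2*c - 8*t^2*c^3 + 2*t*a^3 - 2*t*a*c^2 + 2*a^2*c)*\<sigma>^2*w^2 + (-6*t^4*a^2*c + 4*t^4*c^3 - 20*t^3*a^3 + 8*t^3*a*c^2 - 28*t^2*a^2*c + 8*t^2*c^3 - 20*t*a^3 + 8*t*a*c^2 - 6*a^2*c + 4*c^3)*\<sigma>^2*\<pi>*w + (2*t^4*a^2*c + 2*t^3*a^3 - 2*t^3*a*c^2 + 6*t^2*a^2*c - 8*t^2*c^3 + 2*t*a^3 + 2*t*a*c^2 + 4*a^2*c)*\<sigma>^2*\<pi>^2 + (2*t^4*a^3 + 2*t^4*a*c^2 + 6*t^3*a^2*c + 2*t^2*a^3 + 2*t^2*a*c^2 + 2*t*a^2*c + 4*t*c^3 + 4*a*c^2)*\<sigma>^3*w + (4*t^4*a*c^2 + 2*t^3*a^2*c + 4*t^3*c^3 + 2*t^2*a^3 + 2*t^2*a*c^2 + 6*t*a^2*c + 2*a^3 + 2*a*c^2)*\<sigma>^3*\<pi> + (2*t^4*a^2*c + 2*t^3*a^3 +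 2*t^3*a*c^2 + 4*t^2*a^2*c + 2*t*a^3 + 2*t*a*c^2 + 2*a^2*c)*\<sigma>^4"
definition inc_num_y_sym :: "real \<Rightarrow> real \<Rightarrow> real \<Rightarrow> real \<Rightarrow> real \<Rightarrow> real \<Rightarrow> real" where
  "inc_num_y_sym a c t \<sigma> \<pi> w = (2*t^4*a^2 + 4*t^3*a*c + 2*t^2*a^2)*w^4 + (2*t^4*a^2 + 4*t^3*a*c - 4*t^2*a^2 + 16*t^2*c^2 + 4*t*a*c - 6*a^2)*\<pi>*w^3 + (-10*t^4*a^2 + 16*t^4*c^2 - 4*t^3*a*c + 4*t*a*c + 10*a^2 - 16*c^2)*\<pi>^2*w^2 + (6*t^4*a^2 - 4*t^3*a*c + 4*t^2*a^2 - 16*t^2*c^2 - 4*t*a*c - 2*a^2)*\<pi>^3*w + (-2*t^2*a^2 - 4*t*a*c - 2*a^2)*\<pi>^4 + (2*t^4*a*c - 2*t^3*a^2 + 4*t^3*c^2 - 2*t^2*a*c - 2*t*a^2)*\<sigma>*w^3 + (8*t^4*a*c + 6*t^3*a^2 + 6*t^2*a*c + 6*t*a^2 - 12*t*c^2 - 14*a*c)*\<sigma>*\<pi>*w^2 + (14*t^4*a*c - 6*t^3*a^2 + 12*t^3*c^2 - 6*t^2*a*c - 6*t*a^2 - 8*a*c)*\<sigma>*\<pi>^2*w + (2*t^3*a^2 + 2*t^2*a*c + 2*t*a^2 - 4*t*c^2 - 2*a*c)*\<sigma>*\<pi>^3 + (-2*t^3*a*c + 2*t^2*a^2 - 8*t^2*c^2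 - 2*t*a*c + 2*a^2)*\<sigma>^2*w^2 + (10*t^4*a^2 - 4*t^4*c^2 + 8*t^3*a*c - 8*t*a*c - 10*a^2 + 4*c^2)*\<sigma>^2*\<pi>*w + (-2*t^4*a^2 + 2*t^3*a*c - 2*t^2*a^2 + 8*t^2*c^2 + 2*t*a*c)*\<sigma>^2*\<pi>^2 + (-2*t^4*a*c - 2*t^3*a^2 - 2*t^2*a*c - 2*t*a^2 + 4*t*c^2 + 4*a*c)*\<sigma>^3*w + (-4*t^4*a*c + 2*t^3*a^2 - 4*t^3*c^2 + 2*t^2*a*c + 2*t*a^2 + 2*a*c)*\<sigma>^3*\<pi> + (-2*t^4*a^2 - 2*t^3*a*c + 2*t*a*c + 2*a^2)*\<sigma>^4"

definition focal_prod_red :: "real \<Rightarrow> real \<Rightarrow> real \<Rightarrow> real \<Rightarrow> real" where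
  "focal_prod_red a c K t = (4*t^2*K^2*a^3*c^2 - 3*t^2*K^2*a*c^4 - 2*t^2*K*a*c^2 + t^2*a + 2*t*K^2*c^5 - 8*t*K*a^2*c + 4*t*K*c^3 + 2*t*c + 4*K^2*a^3*c^2 - 3*K^2*a*c^4 - 2*K*a*c^2 + a)"
definition inc_den_red :: "real \<Rightarrow> real \<Rightarrow> real \<Rightarrow> real \<Rightarrow> real" where
  "inc_den_red a c K t = (-4*t^2*K^2*a^3 + 6*t^2*K^2*a*c^2 + 6*t^2*K*a - 4*t*K^2*c^3 - 12*t*K*c - 4*K^2*a^3 + 6*K^2*a*c^2 + 6*K*a)"
definition inc_num_x_red :: "real \<Rightarrow> real \<Rightarrow> real \<Rightarrow> real \<Rightarrow> real" where
  "inc_num_x_red a c K t = (-8*t^8*K^4*a^6*c^3 + 20*t^8*K^4*a^4*c^5 - 10*t^8*K^4*a^2*c^7 + 8*t^8*K^3*a^6*c + 8*t^8*K^3*a^4*c^3 - 14*t^8*K^3*a^2*c^5 - 12*t^8*K^2*a^4*c + 2*t^8*K^2*a^2*c^3 + 6*t^8*K*a^2*c - 32*t^7*K^4*a^7*c^2 + 64*t^7*K^4*a^5*c^4 - 36*t^7*K^4*a^3*c^6 + 8*t^7*K^4*a*c^8 + 48*t^7*K^3*a^5*c^2 - 60*t^7*K^3*a^3*c^4 + 16*t^7*K^3*a*c^6 - 16*t^7*K^2*a^5 - 12*t^7*K^2*a^3*c^2 + 8*t^7*K^2*a*c^4 + 12*t^7*K*a^3 - 32*t^6*K^4*a^6*c^3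 + 32*t^6*K^4*a^4*c^5 + 8*t^6*K^4*a^2*c^7 - 8*t^6*K^4*c^9 + 96*t^6*K^3*a^6*c - 128*t^6*K^3*a^4*c^3 + 8*t^6*K^3*a^2*c^5 + 24*t^6*K^3*c^7 - 96*t^6*K^2*a^4*c + 88*t^6*K^2*a^2*c^3 + 8*t^6*K^2*c^5 + 24*t^6*K*a^2*c - 24*t^6*K*c^3 - 96*t^5*K^4*a^7*c^2 + 192*t^5*K^4*a^5*c^4 - 140*t^5*K^4*a^3*c^6 + 40*t^5*K^4*a*c^8 + 144*t^5*K^3*a^5*c^2 - 180*t^5*K^3*a^3*c^4 + 32*t^5*K^3*a*c^6 - 48*t^5*K^2*a^5 - 4*t^5*K^2*a^3*c^2 + 72*t^5*K^2*a*c^4 + 36*t^5*K*a^3 - 48*t^5*K*a*c^2 - 48*t^4*K^4*a^6*c^3 + 24*t^4*K^4*a^4*c^5 + 36*t^4*K^4*a^2*c^7 - 16*t^4*K^4*c^9 + 176*t^4*K^3*a^6*c - 272*t^4*K^3*a^4*c^3 + 172*t^4*K^3*a^2*c^5 - 80*t^4*K^3*c^7 - 168*t^4*K^2*a^4*c + 300*t^4*K^2*a^2*c^3 - 112*t^4*K^2*c^5 + 36*t^4*K*a^2*c - 48*t^4*K*c^3 - 96*t^3*K^4*a^7*c^2 + 192*t^3*K^4*a^5*c^4 - 140*t^3*K^4*a^3*c^6 + 40*t^3*K^4*a*c^8 + 144*t^3*K^3*a^5*c^2 - 180*t^3*K^3*a^3*c^4 + 32*t^3*K^3*a*c^6 -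 48*t^3*K^2*a^5 - 4*t^3*K^2*a^3*c^2 + 72*t^3*K^2*a*c^4 + 36*t^3*K*a^3 - 48*t^3*K*a*c^2 - 32*t^2*K^4*a^6*c^3 + 32*t^2*K^4*a^4*c^5 + 8*t^2*K^4*a^2*c^7 - 8*t^2*K^4*c^9 + 96*t^2*K^3*a^6*c - 128*t^2*K^3*a^4*c^3 + 8*t^2*K^3*a^2*c^5 + 24*t^2*K^3*c^7 - 96*t^2*K^2*a^4*c + 88*t^2*K^2*a^2*c^3 + 8*t^2*K^2*c^5 + 24*t^2*K*a^2*c - 24*t^2*K*c^3 - 32*t*K^4*a^7*c^2 + 64*t*K^4*a^5*c^4 - 36*t*K^4*a^3*c^6 + 8*t*K^4*a*c^8 + 48*t*K^3*a^5*c^2 - 60*t*K^3*a^3*c^4 + 16*t*K^3*a*c^6 - 16*t*K^2*a^5 - 12*t*K^2*a^3*c^2 + 8*t*K^2*a*c^4 + 12*t*K*a^3 - 8*K^4*a^6*c^3 + 20*K^4*a^4*c^5 - 10*K^4*a^2*c^7 + 8*K^3*a^6*c + 8*K^3*a^4*c^3 - 14*K^3*a^2*c^5 - 12*K^2*a^4*c + 2*K^2*a^2*c^3 + 6*K*a^2*c)"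
definition inc_num_y_red :: "real \<Rightarrow> real \<Rightarrow> real \<Rightarrow> real \<Rightarrow> real" where
  "inc_num_y_red a c K t = (16*t^8*K^4*a^6*c^2 - 24*t^8*K^4*a^4*c^4 + 10*t^8*K^4*a^2*c^6 - 16*t^8*K^3*a^4*c^2 + 14*t^8*K^3*a^2*c^4 + 8*t^8*K^2*a^4 - 2*t^8*K^2*a^2*c^2 - 6*t^8*K*a^2 + 8*t^7*K^4*a^3*c^5 - 8*t^7*K^4*a*c^7 - 32*t^7*K^3*a^5*c + 32*t^7*K^3*a^3*c^3 - 16*t^7*K^3*a*c^5 + 24*t^7*K^2*a^3*c - 8*t^7*K^2*a*c^3 + 32*t^6*K^4*a^6*c^2 - 48*t^6*K^4*a^4*c^4 + 4*t^6*K^4*a^2*c^6 + 8*t^6*K^4*c^8 - 32*t^6*K^3*a^4*c^2 + 60*t^6*K^3*a^2*c^4 - 24*t^6*K^3*c^6 + 16*t^6*K^2*a^4 - 20*t^6*K^2*a^2*c^2 - 8*t^6*K^2*c^4 - 12*t^6*K*a^2 + 24*t^6*K*c^2 + 8*t^5*K^4*a^3*c^5 - 8*t^5*K^4*a*c^7 - 32*t^5*K^3*a^5*c + 32*t^5*K^3*a^3*c^3 + 48*t^5*K^3*a*c^5 + 24*t^5*K^2*a^3*c - 72*t^5*K^2*a*c^3 - 8*t^3*K^4*a^3*c^5 + 8*t^3*K^4*a*c^7 + 32*t^3*K^3*a^5*c - 32*t^3*K^3*a^3*c^3 - 48*t^3*K^3*a*c^5 - 24*t^3*K^2*a^3*c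 + 72*t^3*K^2*a*c^3 - 32*t^2*K^4*a^6*c^2 + 48*t^2*K^4*a^4*c^4 - 4*t^2*K^4*a^2*c^6 - 8*t^2*K^4*c^8 + 32*t^2*K^3*a^4*c^2 - 60*t^2*K^3*a^2*c^4 + 24*t^2*K^3*c^6 - 16*t^2*K^2*a^4 + 20*t^2*K^2*a^2*c^2 + 8*t^2*K^2*c^4 + 12*t^2*K*a^2 - 24*t^2*K*c^2 - 8*t*K^4*a^3*c^5 + 8*t*K^4*a*c^7 + 32*t*K^3*a^5*c - 32*t*K^3*a^3*c^3 + 16*t*K^3*a*c^5 - 24*t*K^2*a^3*c + 8*t*K^2*a*c^3 - 16*K^4*a^6*c^2 + 24*K^4*a^4*c^4 - 10*K^4*a^2*c^6 + 16*K^3*a^4*c^2 - 14*K^3*a^2*c^4 - 8*K^2*a^4 + 2*K^2*a^2*c^2 + 6*K*a^2)"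

lemma focal_prod_sym_eq:
  "w^2 * focal_prod a c t1 t2 t3 = focal_prod_sym a c t1 (w*(t2+t3)) (w*(t2*t3)) w"
  unfolding focal_prod_def focal_prod_sym_def focal_num_def by algebra
lemma inc_den_sym_eq:
  "w^2 * inc_den a c t1 t2 t3 = inc_den_sym a c t1 (w*(t2+t3)) (w*(t2*t3)) w"
  unfolding inc_den_def inc_den_sym_def focal_num_def by algebra
lemma inc_num_x_sym_eq:
  "w^4 * inc_num_x a c t1 t2 t3 = inc_num_x_sym a c t1 (w*(t2+t3)) (w*(t2*t3)) w"
  unfolding inc_num_x_def inc_num_x_sym_def focal_num_def by algebra
lemma inc_num_y_sym_eq:
  "w^4 * inc_num_y a c t1 t2 t3 = inc_num_y_sym a c t1 (w*(t2+t3)) (w*(t2*t3)) w"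
  unfolding inc_num_y_def inc_num_y_sym_def focal_num_def by algebra

lemma focal_prod_sym_red:
  "focal_prod_sym a c t (- rel_coeff1 a c K t) (rel_coeff0 a c K t) (rel_coeff2 a c K t)
     = (focal_num a c t)^2 * focal_prod_red a c K t"
  unfolding focal_prod_sym_def focal_prod_red_def rel_coeff2_def rel_coeff1_def rel_coeff0_def focal_num_def
  by algebra
lemma inc_den_sym_red:
  "inc_den_sym a c t (- rel_coeff1 a c K t) (rel_coeff0 a c K t) (rel_coeff2 a c K t)
     = (focal_num a c t)^2 * inc_den_red a c K t"
  unfolding inc_den_sym_def inc_den_red_def rel_coeff2_def rel_coeff1_def rel_coeff0_def focal_num_def
  by algebra
lemma inc_num_x_sym_red:
  "inc_num_x_sym a c t (- rel_coeff1 a c K t) (rel_coeff0 a c K t) (rel_coeff2 a c K t)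
     = (focal_num a c t)^2 * inc_num_x_red a c K t"
  unfolding inc_num_x_sym_def inc_num_x_red_def rel_coeff2_def rel_coeff1_def rel_coeff0_def focal_num_def
  by algebra
lemma inc_num_y_sym_red:
  "inc_num_y_sym a c t (- rel_coeff1 a c K t) (rel_coeff0 a c K t) (rel_coeff2 a c K t)
     = (focal_num a c t)^2 * inc_num_y_red a c K t"
  unfolding inc_num_y_sym_def inc_num_y_red_def rel_coeff2_def rel_coeff1_def rel_coeff0_def focal_num_def
  by algebra

lemma inc_red_circle_identity:
  assumes "c^4*K^2 + 2*(2*a^2-c^2)*K - 3 = 0"
  shows "4*a^2*(2*(a^2-c^2)^2*inc_num_x_red a c K t
             - c*(c^4*K + a^2 - 2*c^2)*((focal_num a c t)^2*inc_den_red a c K t*focal_prod_red a c K t))^2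
     + 16*a^2*(a^2-c^2)^5*(inc_num_y_red a c K t)^2
     = ((a^2+c^2)*(c^4*K + 2*a^2 - c^2) - 2*a^4 - 2*c^4)^2
       *((focal_num a c t)^2*inc_den_red a c K t*focal_prod_red a c K t)^2"
  using assms unfolding inc_num_x_red_def inc_num_y_red_def inc_den_red_def focal_prod_red_def focal_num_def
  by algebra

lemma divide_eq_divide_if_scaled:
  fixes N D N' D' x y :: "'a::field"
  assumes "x*N = y*N'" "x*D = y*D'" "x \<noteq> 0" "y \<noteq> 0"
  shows "N/D = N'/D'"
proof -
  have "N/D = (x*N)/(x*D)" using assms(3) by simp
  also have "\<dots> = N'/D'" unfolding assms(1,2) using assms(4) by simp
  finally show ?thesis .
qed

lemma circle_eq_clear_denominators:
  fixes X Y W a b2 c K0 r0 :: real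
  assumes "W \<noteq> 0" "a \<noteq> 0" "b2 \<noteq> 0"
    and "4*a^2*(2*b2^2*X - c*K0*W)^2 + 16*a^2*b2^5*Y^2 = r0^2*W^2"
  shows "(X/W - c*K0/(2*b2^2))^2 + b2*(Y/W)^2 = (r0/(4*a*b2^2))^2"
proof -
  have e: "X/W - c*K0/(2*b2^2) = (2*b2^2*X - c*K0*W)/(2*b2^2*W)" using assms by (simp add: field_simps)
  have "(16*a^2*b2^4*W^2) * ((X/W - c*K0/(2*b2^2))^2 + b2*(Y/W)^2)
      = 4*a^2*(2*b2^2*X - c*K0*W)^2 + 16*a^2*b2^5*Y^2"
    unfolding e using assms by (simp add: power_divide field_simps) algebra
  also have "\<dots> = (16*a^2*b2^4*W^2) * (r0/(4*a*b2^2))^2"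
    using assms by (simp add: power_divide field_simps)
  finally show ?thesis using assms by simp
qed

lemma inc_param_on_circle:
  assumes "0 < c" "c < a" "K > 0"
    and "chord_relation a c K t1 t2" "chord_relation a c K t1 t3" "chord_relation a c K t2 t3"
    and "t1 \<noteq> t2" "t2 \<noteq> t3"
  defines "X \<equiv> inc_num_x a c t1 t2 t3 / (inc_den a c t1 t2 t3 * focal_prod a c t1 t2 t3)"
    and "Y \<equiv> inc_num_y a c t1 t2 t3 / (inc_den a c t1 t2 t3 * focal_prod a c t1 t2 t3)"
  shows "(X - c*(c^4*K + a^2 - 2*c^2)/(2*(a^2-c^2)^2))^2 + (a^2-c^2)*Y^2
       = (((a^2+c^2)*(c^4*K + 2*a^2 - c^2) - 2*a^4 - 2*c^4)/(4*a*(a^2-c^2)^2))^2"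
proof -
  define A where "A = rel_coeff2 a c K t1"
  note vieta = chord_relations_vieta[OF assms(1-5,8), folded A_def]
  define W where "W = (focal_num a c t1)^2 * inc_den_red a c K t1 * focal_prod_red a c K t1"
  have den1: "A^2 * inc_den a c t1 t2 t3 = (focal_num a c t1)^2 * inc_den_red a c K t1"
    using inc_den_sym_eq[of A a c t1 t2 t3] inc_den_sym_red[of a c t1 K] vieta
    unfolding A_def by simp
  have den2: "A^2 * focal_prod a c t1 t2 t3 = (focal_num a c t1)^2 * focal_prod_red a c K t1"
    using focal_prod_sym_eq[of A a c t1 t2 t3] focal_prod_sym_red[of a c t1 K] vieta
    unfolding A_def by simp
  have "A^4 * (inc_den a c t1 t2 t3 * focal_prod a c t1 t2 t3)
      = (A^2 * inc_den a c t1 t2 t3) * (A^2 * focal_prod a c t1 t2 t3)"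
    by algebra
  then have den: "A^4 * (inc_den a c t1 t2 t3 * focal_prod a c t1 t2 t3) = (focal_num a c t1)^2 * W"
    unfolding den1 den2 W_def by algebra
  have num_x: "A^4 * inc_num_x a c t1 t2 t3 = (focal_num a c t1)^2 * inc_num_x_red a c K t1"
    using inc_num_x_sym_eq[of A a c t1 t2 t3] inc_num_x_sym_red[of a c t1 K] vieta
    unfolding A_def by simp
  have num_y: "A^4 * inc_num_y a c t1 t2 t3 = (focal_num a c t1)^2 * inc_num_y_red a c K t1"
    using inc_num_y_sym_eq[of A a c t1 t2 t3] inc_num_y_sym_red[of a c t1 K] vieta
    unfolding A_def by simp
  have pos: "inc_den a c t1 t2 t3 * focal_prod a c t1 t2 t3 > 0" "focal_num a c t1 > 0"
    using inc_den_pos[OF assms(1,2,7)] focal_prod_pos[OF assms(1,2)] focal_num_pos[OF assms(1,2)]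
    by simp_all
  have "W \<noteq> 0"
    using den pos vieta(1) by (metis mult_eq_0_iff power_not_zero less_irrefl)
  have "X = inc_num_x_red a c K t1 / W" and "Y = inc_num_y_red a c K t1 / W"
    unfolding X_def Y_def
    using divide_eq_divide_if_scaled[OF num_x den] divide_eq_divide_if_scaled[OF num_y den]
      pos vieta(1) by simp_all
  moreover have "c^2 < a^2" using assms by (simp add: power_strict_mono)
  ultimately show ?thesis
    using circle_eq_clear_denominators[OF \<open>W \<noteq> 0\<close>, of a "a^2-c^2"]
      inc_red_circle_identity[OF caustic_equation[OF assms(1-6,8)], of t1, folded W_def] assms
    by simp
qed

lemma weighted_mean_rescale:
  fixes k g1 g2 g3 d1 d2 d3 :: real and z1 z2 z3 :: complex
  assumes "k \<noteq> 0"
  shows "(of_real (g1/k/d1) * z1 + of_real (g2/k/d2) * z2 + of_real (g3/k/d3) * z3)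
           / of_real (g1/k*d1 + g2/k*d2 + g3/k*d3)
       = (of_real (g1/d1) * z1 + of_real (g2/d2) * z2 + of_real (g3/d3) * z3)
           / of_real (g1*d1 + g2*d2 + g3*d3)"
proof (rule divide_eq_divide_if_scaled[of "of_real k" _ 1])
  have "of_real k * (of_real (g/k/d) * z) = of_real (g/d) * z" for g d :: real and z :: complex
  proof -
    have "k * (g/k/d) = g/d" using assms by simp
    then show ?thesis by (simp only: mult.assoc[symmetric] of_real_mult[symmetric])
  qed
  then show "of_real k * (of_real (g1/k/d1) * z1 + of_real (g2/k/d2) * z2 + of_real (g3/k/d3) * z3)
      = 1 * (of_real (g1/d1) * z1 + of_real (g2/d2) * z2 + of_real (g3/d3) * z3)"
    by (simp only: distrib_left mult_1_left)
  have "k * (g1/k*d1 + g2/k*d2 + g3/k*d3) = g1*d1 + g2*d2 + g3*d3" using assms by (simp add: field_simps)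
  then show "of_real k * of_real (g1/k*d1 + g2/k*d2 + g3/k*d3) = 1 * (of_real (g1*d1 + g2*d2 + g3*d3) :: complex)"
    by (simp only: of_real_mult[symmetric] mult_1_left)
qed (use assms in simp_all)

lemma focal_weighted_mean_ellipse_points:
  fixes a b c x y z :: real
  assumes "0 < c" "c < a" "x \<noteq> y"
  defines "g1 \<equiv> 2*(y-z)^2/((1+y^2)*(1+z^2))" and "g2 \<equiv> 2*(x-z)^2/((1+x^2)*(1+z^2))"
    and "g3 \<equiv> 2*(x-y)^2/((1+x^2)*(1+y^2))"
    and "d1 \<equiv> focal_num a c x/(1+x^2)" and "d2 \<equiv> focal_num a c y/(1+y^2)"
    and "d3 \<equiv> focal_num a c z/(1+z^2)"
    and "Q \<equiv> inc_den a c x y z * focal_prod a c x y z"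
  shows "(of_real (g1/d1) * Complex (2*a*x/(1+x^2) + c) (b*(1-x^2)/(1+x^2))
        + of_real (g2/d2) * Complex (2*a*y/(1+y^2) + c) (b*(1-y^2)/(1+y^2))
        + of_real (g3/d3) * Complex (2*a*z/(1+z^2) + c) (b*(1-z^2)/(1+z^2)))
       / of_real (g1*d1 + g2*d2 + g3*d3)
       = Complex (inc_num_x a c x y z / Q) (b * (inc_num_y a c x y z / Q))"
proof -
  define T where "T = (1+x^2)*(1+y^2)*(1+z^2)"
  have T: "1+x^2 > 0" "1+y^2 > 0" "1+z^2 > 0" by (simp_all add: add_pos_nonneg)
  then have inv: "inverse (1+x^2) * (1+x^2) = 1" "inverse (1+y^2) * (1+y^2) = 1"
    "inverse (1+z^2) * (1+z^2) = 1" "inverse (focal_num a c x) * focal_num a c x = 1"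
    "inverse (focal_num a c y) * focal_num a c y = 1" "inverse (focal_num a c z) * focal_num a c z = 1"
    using focal_num_pos[OF assms(1,2), of x] focal_num_pos[OF assms(1,2), of y]
      focal_num_pos[OF assms(1,2), of z] by simp_all
  have num: "of_real (g1/d1) * Complex (2*a*x/(1+x^2) + c) (b*(1-x^2)/(1+x^2))
       + of_real (g2/d2) * Complex (2*a*y/(1+y^2) + c) (b*(1-y^2)/(1+y^2))
       + of_real (g3/d3) * Complex (2*a*z/(1+z^2) + c) (b*(1-z^2)/(1+z^2))
       = of_real (2/(T * focal_prod a c x y z)) * Complex (inc_num_x a c x y z) (b * inc_num_y a c x y z)"
    unfolding complex_eq_iff plus_complex.sel times_complex.sel Re_complex_of_real Im_complex_of_real complex.sel
    unfolding g1_def g2_def g3_def d1_def d2_def d3_def T_def inc_num_x_def inc_num_y_def focal_prod_def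
      divide_inverse inverse_mult_distrib inverse_inverse_eq
    using inv by algebra
  have den: "g1*d1 + g2*d2 + g3*d3 = 2 * inc_den a c x y z / T"
    unfolding g1_def g2_def g3_def d1_def d2_def d3_def T_def inc_den_def divide_inverse inverse_mult_distrib
    by algebra
  have "inc_den a c x y z > 0" "focal_prod a c x y z > 0" "T > 0"
    using inc_den_pos[OF assms(1-3)] focal_prod_pos[OF assms(1,2)] T unfolding T_def by simp_all
  then show ?thesis
    unfolding num den Q_def by (simp add: complex_eq_iff field_simps)
qed

lemma inverted_incenter_ellipse_points:
  fixes a b c \<rho> k t1 t2 t3 :: real
  defines "P1 \<equiv> ellipse_point a b t1" and "P2 \<equiv> ellipse_point a b t2" and "P3 \<equiv> ellipse_point a b t3"
    and "f \<equiv> Complex (-c) 0" and "Q \<equiv> inc_den a c t1 t2 t3 * focal_prod a c t1 t2 t3"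
  assumes "b \<noteq> 0" "c^2 = a^2 - b^2" "0 < c" "c < a" "\<rho> \<noteq> 0" "k \<noteq> 0"
    and "P1 \<noteq> P2" "P1 \<noteq> P3" "P2 \<noteq> P3" "t1 \<noteq> t2"
    and "k * cmod (P1 - P2) = polar_gap a b P1 P2" "k * cmod (P1 - P3) = polar_gap a b P1 P3"
    and "k * cmod (P2 - P3) = polar_gap a b P2 P3"
  shows "incenter (inversion \<rho> f P1) (inversion \<rho> f P2) (inversion \<rho> f P3)
       = f + of_real (\<rho>^2) * Complex (inc_num_x a c t1 t2 t3 / Q) (b * (inc_num_y a c t1 t2 t3 / Q))"
proof -
  have "a \<noteq> 0" using assms(8,9) by simp
  have foc: "cmod (P1 - f) = focal_num a c t1/(1+t1^2)" "cmod (P2 - f) = focal_num a c t2/(1+t2^2)"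
    "cmod (P3 - f) = focal_num a c t3/(1+t3^2)"
    unfolding P1_def P2_def P3_def f_def using norm_ellipse_point_focus[OF assms(7-9)] by simp_all
  moreover have "1+t^2 > 0" "focal_num a c t > 0" for t
    using focal_num_pos[OF assms(8,9)] by (simp_all add: add_pos_nonneg)
  ultimately have d: "cmod (P1 - f) > 0" "cmod (P2 - f) > 0" "cmod (P3 - f) > 0" by simp_all
  then have "P1 \<noteq> f" "P2 \<noteq> f" "P3 \<noteq> f" by auto
  have "cmod (P2 - P3) * cmod (P1 - f) + cmod (P1 - P3) * cmod (P2 - f) + cmod (P1 - P2) * cmod (P3 - f) > 0"
    by (intro add_pos_pos mult_pos_pos d) (use assms(12-14) in auto)
  then have S: "cmod (P2 - P3) * cmod (P1 - f) + cmod (P1 - P3) * cmod (P2 - f) + cmod (P1 - P2) * cmod (P3 - f) \<noteq> 0"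
    by simp
  have sides: "cmod (P2 - P3) = polar_gap a b P2 P3 / k" "cmod (P1 - P3) = polar_gap a b P1 P3 / k"
    "cmod (P1 - P2) = polar_gap a b P1 P2 / k"
    using assms(11,16-18) by (simp_all add: eq_divide_eq mult.commute)
  have gap: "polar_gap a b P1 P2 = 2*(t1-t2)^2/((1+t1^2)*(1+t2^2))"
    "polar_gap a b P1 P3 = 2*(t1-t3)^2/((1+t1^2)*(1+t3^2))"
    "polar_gap a b P2 P3 = 2*(t2-t3)^2/((1+t2^2)*(1+t3^2))"
    unfolding P1_def P2_def P3_def using polar_gap_ellipse_point[OF \<open>a \<noteq> 0\<close> assms(6)] by simp_all
  have diffs: "P1 - f = Complex (2*a*t1/(1+t1^2) + c) (b*(1-t1^2)/(1+t1^2))"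
    "P2 - f = Complex (2*a*t2/(1+t2^2) + c) (b*(1-t2^2)/(1+t2^2))"
    "P3 - f = Complex (2*a*t3/(1+t3^2) + c) (b*(1-t3^2)/(1+t3^2))"
    unfolding P1_def P2_def P3_def f_def ellipse_point_def by (simp_all add: complex_eq_iff)
  show ?thesis
    unfolding incenter_inversion[OF \<open>P1 \<noteq> f\<close> \<open>P2 \<noteq> f\<close> \<open>P3 \<noteq> f\<close> assms(10) S] times_divide_eq_right[symmetric]
    unfolding sides weighted_mean_rescale[OF assms(11)]
    unfolding gap foc unfolding diffs Q_def
    by (simp only: focal_weighted_mean_ellipse_points[OF assms(8,9,15)])
qed

lemma inverted_incircle_radius_nonneg:
  fixes a b :: real
  assumes "b^2 \<le> a^2"
  defines "\<delta> \<equiv> sqrt (a^4 - a^2*b^2 + b^4)"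
  shows "- 2 * \<delta>^2 + b^4 + (2*a^2 - b^2) * \<delta> \<ge> 0"
proof -
  have d: "\<delta>^2 = a^4 - a^2*b^2 + b^4" "\<delta> \<ge> 0" unfolding \<delta>_def using quartic_nonneg[of a b] by simp_all
  have "((2*a^2 - b^2)*\<delta>)^2 - (2*a^4 - 2*a^2*b^2 + b^4)^2 = a^2*b^4*(a^2 - b^2)"
    unfolding power_mult_distrib d(1) by algebra
  moreover have "a^2*b^4*(a^2 - b^2) \<ge> 0" using assms by simp
  ultimately have "(2*a^4 - 2*a^2*b^2 + b^4)^2 \<le> ((2*a^2 - b^2)*\<delta>)^2" by simp
  moreover have "2*a^2 - b^2 \<ge> 0" using assms(1) zero_le_power2[of a] by linarith
  then have "(2*a^2 - b^2)*\<delta> \<ge> 0" using d(2) by simp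
  ultimately have "2*a^4 - 2*a^2*b^2 + b^4 \<le> (2*a^2 - b^2)*\<delta>" by (rule power2_le_imp_le)
  then show ?thesis unfolding d(1) by simp
qed

lemma inverted_incenter_on_circle:
  fixes a b \<rho> :: real and P1 P2 P3 :: complex
  defines "c \<equiv> sqrt (a^2 - b^2)" and "\<delta> \<equiv> sqrt (a^4 - a^2*b^2 + b^4)"
  assumes "a > 0" "b \<noteq> 0" "b^2 < a^2" "\<rho> > 0"
    and "three_periodic a b P1 P2 P3" "Complex 0 (-b) \<notin> {P1, P2, P3}"
  shows "dist (incenter (inversion \<rho> (Complex (-c) 0) P1) (inversion \<rho> (Complex (-c) 0) P2)
                (inversion \<rho> (Complex (-c) 0) P3))
              (Complex (c * (- 1 + \<rho>^2 * (- 2 * a^2 + b^2 + 2 * \<delta>) / (2 * b^4))) 0)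
       = \<rho>^2 * (- 2 * \<delta>^2 + b^4 + (2 * a^2 - b^2) * \<delta>) / (2 * a * b^4)"
proof -
  have c: "c^2 = a^2 - b^2" "0 < c" "c < a"
    using assms(3-5) real_sqrt_less_iff[of "a^2 - b^2" "a^2"] unfolding c_def by auto
  obtain t1 t2 t3 k where P: "P1 = ellipse_point a b t1" "P2 = ellipse_point a b t2" "P3 = ellipse_point a b t3"
    and t: "t1 \<noteq> t2" "t1 \<noteq> t3" "t2 \<noteq> t3" and k: "k > 0"
    "k * cmod (P1 - P2) = polar_gap a b P1 P2" "k * cmod (P1 - P3) = polar_gap a b P1 P3"
    "k * cmod (P2 - P3) = polar_gap a b P2 P3"
    and rel: "chord_relation a c (k^2) t1 t2" "chord_relation a c (k^2) t1 t3" "chord_relation a c (k^2) t2 t3"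
    using three_periodic_parameters[OF _ assms(4) c(1) assms(7,8)] assms(3) by (metis less_irrefl)
  have "k^2 > 0" using k(1) by simp
  define X Y where "X = inc_num_x a c t1 t2 t3 / (inc_den a c t1 t2 t3 * focal_prod a c t1 t2 t3)"
    and "Y = inc_num_y a c t1 t2 t3 / (inc_den a c t1 t2 t3 * focal_prod a c t1 t2 t3)"
  define Kp r where "Kp = (- 2 * a^2 + b^2 + 2 * \<delta>) / (2 * b^4)"
    and "r = (- 2 * \<delta>^2 + b^4 + (2 * a^2 - b^2) * \<delta>) / (2 * a * b^4)"
  have inc: "incenter (inversion \<rho> (Complex (-c) 0) P1) (inversion \<rho> (Complex (-c) 0) P2)
      (inversion \<rho> (Complex (-c) 0) P3) = Complex (-c) 0 + of_real (\<rho>^2) * Complex X (b * Y)"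
    using inverted_incenter_ellipse_points[OF assms(4) c, of \<rho> k t1 t2 t3] assms(6,7) k t
    unfolding X_def Y_def P three_periodic_def by auto
  note data = caustic_circle_data[OF c(1) less_imp_le[OF \<open>k^2 > 0\<close>]
      caustic_equation[OF c(2,3) \<open>k^2 > 0\<close> rel t(3)], folded \<delta>_def]
  have ac: "a^2 - c^2 = b^2" "(a^2 - c^2)^2 = b^4" using c(1) by (simp_all flip: power_mult)
  have "(X - c*Kp)^2 + b^2*Y^2 = r^2"
    using inc_param_on_circle[OF c(2,3) \<open>k^2 > 0\<close> rel t(1,3), folded X_def Y_def]
    unfolding ac(2) unfolding ac(1) data Kp_def r_def .
  then have circle: "(X - c*Kp)^2 + (b*Y)^2 = r^2" by (simp add: power_mult_distrib)
  have "r \<ge> 0"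
    using inverted_incircle_radius_nonneg[of b a] assms(3,5) unfolding r_def \<delta>_def by simp
  have diff: "incenter (inversion \<rho> (Complex (-c) 0) P1) (inversion \<rho> (Complex (-c) 0) P2)
      (inversion \<rho> (Complex (-c) 0) P3) - Complex (c * (- 1 + \<rho>^2 * (- 2 * a^2 + b^2 + 2 * \<delta>) / (2 * b^4))) 0
      = of_real (\<rho>^2) * Complex (X - c*Kp) (b*Y)"
    unfolding inc Kp_def by (simp add: complex_eq_iff algebra_simps)
  have "dist (incenter (inversion \<rho> (Complex (-c) 0) P1) (inversion \<rho> (Complex (-c) 0) P2)
                (inversion \<rho> (Complex (-c) 0) P3))
              (Complex (c * (- 1 + \<rho>^2 * (- 2 * a^2 + b^2 + 2 * \<delta>) / (2 * b^4))) 0)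
      = \<rho>^2 * sqrt ((X - c*Kp)^2 + (b*Y)^2)"
    unfolding dist_norm diff norm_mult norm_of_real by (simp add: cmod_def)
  also have "\<dots> = \<rho>^2 * r" unfolding circle using \<open>r \<ge> 0\<close> by simp
  finally show ?thesis unfolding r_def by simp
qed

theorem mainTheorem10:
  fixes a b \<rho> :: real and P1 P2 P3 :: complex
  assumes "a > b" and "b > 0" and "\<rho> > 0"
    and "three_periodic a b P1 P2 P3"
  shows "let c = sqrt (a\<^sup>2 - b\<^sup>2);
             \<delta> = sqrt (a ^ 4 - a\<^sup>2 * b\<^sup>2 + b ^ 4);
             f1 = Complex (- c) 0;
             C1 = Complex (c * (- 1 + \<rho>\<^sup>2 * (- 2 * a\<^sup>2 + b\<^sup>2 + 2 * \<delta>) / (2 * b ^ 4))) 0;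
             R1 = \<rho>\<^sup>2 * (- 2 * \<delta>\<^sup>2 + b ^ 4 + (2 * a\<^sup>2 - b\<^sup>2) * \<delta>) / (2 * a * b ^ 4)
         in dist (incenter (inversion \<rho> f1 P1) (inversion \<rho> f1 P2) (inversion \<rho> f1 P3)) C1 = R1"
proof -
  have "b \<noteq> 0" "b^2 < a^2" using assms(1,2) by (simp_all add: power_strict_mono)
  obtain \<beta> where "\<beta>^2 = b^2" "three_periodic a \<beta> P1 P2 P3" "Complex 0 (-\<beta>) \<notin> {P1, P2, P3}"
    using three_periodic_avoid_vertex[OF \<open>b \<noteq> 0\<close> assms(4)] by blast
  moreover have "\<beta> \<noteq> 0" "\<beta>^4 = b^4" using \<open>\<beta>^2 = b^2\<close> \<open>b \<noteq> 0\<close> by (auto simp: power4_eq_xxxx power2_eq_square)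
  ultimately show ?thesis
    using inverted_incenter_on_circle[of a \<beta> \<rho>] assms \<open>b^2 < a^2\<close> unfolding Let_def by simp
qed

end
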